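(* For integers $n,m,l,r$ with $1\leq m\leq l<n$ and $0\leq r\leq 2l-2m+2$, the polynomial \[ K_q(n,m)K_q(n,l)-q^{r}K_q(n,m-1)K_q(n,l+1) \] has nonnegative coefficients as a polynomial in $q$.
   Context: For integers $n\ge m\ge 0$ the Gaussian polynomial is ${n\brack m}=\prod_{i=0}^{m-1}\frac{1-q^{n-i}}{1-q^{m-i}}$. For $n\geq 1$ and $0\le m\le n$, the $q$-Kaplansky number is $K_q(n,m)=\frac{1-q^{n+m}}{1-q^{n}}{n\brack m}$ (a polynomial in $q$). *)

theory Defs
  imports "HOL-Computational_Algebra.Polynomial"
begin

text \<open>Gaussian polynomial [n choose m]_q, defined literally as the quotient of the
  products in the paper, computed in the polynomial ring Q[q] (exact division).\<close>
definition gauss_poly :: "nat \<Rightarrow> nat \<Rightarrow> rat poly" where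
  "gauss_poly n m =
     (\<Prod>i<m. 1 - monom 1 (n - i)) div (\<Prod>i<m. 1 - monom 1 (m - i))"

definition kaplansky_poly :: "nat \<Rightarrow> nat \<Rightarrow> rat poly" where
  "kaplansky_poly n m = ((1 - monom 1 (n + m)) * gauss_poly n m) div (1 - monom 1 n)"

end

theory Submission
  imports Defs
begin

text \<open>
  Write \<open>[a, i]\<close> for the Gaussian polynomial. By the q-absorption identity,
  \<open>K\<^sub>q(n, m) = [n, m] + q\<^sup>n [n-1, m-1] = q\<^sup>m [n, m] + [n-1, m-1]\<close>.
  Expanding the four Kaplansky numbers with one of these two forms writes
  \<open>K\<^sub>q(n,m) K\<^sub>q(n,l) - q\<^sup>r K\<^sub>q(n,m-1) K\<^sub>q(n,l+1)\<close> as a combination, with monomial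
  coefficients, of four defects \<open>[a, i] [b, j] - q\<^sup>t [a, i-1] [b, j+1]\<close>.
  Such a defect has nonnegative coefficients whenever
  \<open>b - j - 1 \<le> a - i\<close>, \<open>i \<le> j + 1\<close> and \<open>t \<le> a - b + 2 (j - i + 1)\<close>: by induction on
  \<open>a + b\<close>, one of the two q-Pascal recurrences (chosen according to \<open>t = 0\<close> or \<open>t > 0\<close>)
  turns it into a nonnegative combination of two smaller defects in the same region.
\<close>

definition qvar :: "rat poly" where
  "qvar = [:0, 1:]"

lemma monom_one_eq_qvar_power: "monom 1 k = qvar ^ k"
  by (simp add: monom_altdef qvar_def)

lemma qvar_power_eq_1_iff: "qvar ^ k = 1 \<longleftrightarrow> k = 0"
proof
  assume "qvar ^ k = 1"
  then have "poly (qvar ^ k) 0 = 1" by simp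
  then show "k = 0" by (cases k) (simp_all add: qvar_def)
qed simp

definition qfalling :: "nat \<Rightarrow> nat \<Rightarrow> rat poly" where
  "qfalling n m = (\<Prod>i<m. 1 - qvar ^ (n - i))"

lemma qfalling_Suc: "qfalling n (Suc k) = qfalling n k * (1 - qvar ^ (n - k))"
  by (simp add: qfalling_def)

lemma qfalling_Suc_Suc: "qfalling (Suc n) (Suc k) = (1 - qvar ^ Suc n) * qfalling n k"
  unfolding qfalling_def prod.lessThan_Suc_shift by simp

lemma qfalling_eq_0_iff: "qfalling n m = 0 \<longleftrightarrow> n < m"
  by (auto simp: qfalling_def qvar_power_eq_1_iff)

text \<open>Indexing by an integer makes \<open>qbinom n k\<close> vanish outside \<open>0 \<le> k \<le> n\<close>, so both
  q-Pascal recurrences hold without side conditions.\<close>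
fun qbinom :: "nat \<Rightarrow> int \<Rightarrow> rat poly" where
  "qbinom 0 k = (if k = 0 then 1 else 0)"
| "qbinom (Suc n) k = qbinom n (k - 1) + qvar ^ nat k * qbinom n k"

lemma qbinom_eq_0: "k < 0 \<or> int n < k \<Longrightarrow> qbinom n k = 0"
  by (induction n arbitrary: k) auto

lemma qbinom_0_right [simp]: "qbinom n 0 = 1"
  by (induction n) (simp_all add: qbinom_eq_0)

lemma qbinom_Suc_Suc:
  "qbinom (Suc n) (int (Suc k)) = qbinom n (int k) + qvar ^ Suc k * qbinom n (int (Suc k))"
  by (simp add: nat_add_distrib)

lemma qbinom_mult_qfalling: "qbinom n (int m) * qfalling m m = qfalling n m"
proof (induction n arbitrary: m)
  case 0
  show ?case by (cases m) (simp_all add: qfalling_eq_0_iff qfalling_def)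
next
  case (Suc n)
  show ?case
  proof (cases m)
    case 0
    then show ?thesis by (simp add: qfalling_def)
  next
    case (Suc k)
    have "qbinom (Suc n) (int m) * qfalling m m
        = (1 - qvar ^ Suc k) * (qbinom n (int k) * qfalling k k)
          + qvar ^ Suc k * (qbinom n (int (Suc k)) * qfalling (Suc k) (Suc k))"
      unfolding Suc qbinom_Suc_Suc qfalling_Suc_Suc by (simp only: algebra_simps)
    also have "\<dots> = (1 - qvar ^ Suc k) * qfalling n k + qvar ^ Suc k * (qfalling n k * (1 - qvar ^ (n - k)))"
      by (simp only: Suc.IH qfalling_Suc[of n k])
    also have "\<dots> = (1 - qvar ^ Suc n) * qfalling n k"
    proof (cases "k \<le> n")
      case True
      then have pow: "qvar ^ Suc k * qvar ^ (n - k) = qvar ^ Suc n"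
        by (simp flip: power_add)
      have "(1 - x) * f + x * (f * (1 - y)) = (1 - x * y) * f" for x y f :: "rat poly"
        by (simp add: algebra_simps)
      then show ?thesis unfolding pow[symmetric] .
    next
      case False
      then have "qfalling n k = 0" by (simp add: qfalling_eq_0_iff)
      then show ?thesis by simp
    qed
    also have "\<dots> = qfalling (Suc n) m"
      by (simp only: Suc qfalling_Suc_Suc)
    finally show ?thesis .
  qed
qed

lemma qfalling_self_neq_0: "qfalling m m \<noteq> 0"
  by (simp add: qfalling_eq_0_iff)

lemma gauss_poly_eq_qbinom: "gauss_poly n m = qbinom n (int m)"
proof -
  have "gauss_poly n m = qfalling n m div qfalling m m"
    by (simp add: gauss_poly_def qfalling_def monom_one_eq_qvar_power)
  also have "\<dots> = qbinom n (int m) * qfalling m m div qfalling m m"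
    by (simp only: qbinom_mult_qfalling)
  finally show ?thesis
    by (simp add: qfalling_self_neq_0)
qed

lemma qbinom_Suc_Suc_alt:
  "qbinom (Suc n) (int (Suc k)) = qvar ^ (n - k) * qbinom n (int k) + qbinom n (int (Suc k))"
proof (cases "k \<le> n")
  case True
  have "qbinom (Suc n) (int (Suc k)) * qfalling (Suc k) (Suc k) = (1 - qvar ^ Suc n) * qfalling n k"
    by (simp only: qbinom_mult_qfalling qfalling_Suc_Suc[of n k])
  also have "\<dots> = qvar ^ (n - k) * (1 - qvar ^ Suc k) * qfalling n k + qfalling n k * (1 - qvar ^ (n - k))"
  proof -
    have pow: "qvar ^ (n - k) * qvar ^ Suc k = qvar ^ Suc n"
      using True by (simp flip: power_add)
    have "(1 - x * y) * f = x * (1 - y) * f + f * (1 - x)" for x y f :: "rat poly"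
      by (simp add: algebra_simps)
    then show ?thesis unfolding pow[symmetric] .
  qed
  also have "\<dots> = qvar ^ (n - k) * (1 - qvar ^ Suc k) * (qbinom n (int k) * qfalling k k)
        + qbinom n (int (Suc k)) * qfalling (Suc k) (Suc k)"
    by (simp only: qbinom_mult_qfalling qfalling_Suc[of n k])
  also have "\<dots> = (qvar ^ (n - k) * qbinom n (int k) + qbinom n (int (Suc k))) * qfalling (Suc k) (Suc k)"
    by (simp only: qfalling_Suc_Suc algebra_simps)
  finally show ?thesis
    by (simp only: mult_right_cancel[OF qfalling_self_neq_0])
qed (simp add: qbinom_eq_0)

lemma qbinom_Suc_alt:
  "qbinom (Suc n) k = qvar ^ nat (int (Suc n) - k) * qbinom n (k - 1) + qbinom n k"
proof (cases "k \<le> 0")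
  case True
  then show ?thesis by (cases "k = 0") (simp_all add: qbinom_eq_0)
next
  case False
  then obtain k' where k: "k = int (Suc k')"
    by (metis gr0_implies_Suc not_le of_nat_0_less_iff zero_less_imp_eq_int)
  then have "nat (int (Suc n) - k) = n - k'"
    by simp
  then show ?thesis
    using qbinom_Suc_Suc_alt[of n k'] k by simp
qed

lemma qbinom_absorb:
  "(1 - qvar ^ m) * qbinom (Suc n) (int m) = (1 - qvar ^ Suc n) * qbinom n (int m - 1)"
proof (cases m)
  case (Suc k)
  have "(1 - qvar ^ m) * qbinom (Suc n) (int m) * qfalling k k
      = qbinom (Suc n) (int (Suc k)) * qfalling (Suc k) (Suc k)"
    by (simp only: Suc qfalling_Suc_Suc ac_simps)
  also have "\<dots> = (1 - qvar ^ Suc n) * qfalling n k"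
    by (simp only: qbinom_mult_qfalling qfalling_Suc_Suc[of n k])
  also have "\<dots> = (1 - qvar ^ Suc n) * qbinom n (int m - 1) * qfalling k k"
    by (simp add: Suc mult.assoc qbinom_mult_qfalling)
  finally show ?thesis
    by (simp only: mult_right_cancel[OF qfalling_self_neq_0])
qed (simp add: qbinom_eq_0)

lemma kaplansky_poly_eq:
  assumes "n \<noteq> 0"
  shows "kaplansky_poly n m = qbinom n (int m) + qvar ^ n * qbinom (n - 1) (int m - 1)"
proof -
  obtain n' where n: "n = Suc n'"
    using assms not0_implies_Suc by blast
  have "(1 - qvar ^ (n + m)) * qbinom n (int m)
      = (1 - qvar ^ n) * qbinom n (int m) + qvar ^ n * ((1 - qvar ^ m) * qbinom n (int m))"
    by (simp add: algebra_simps power_add)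
  also have "\<dots> = (1 - qvar ^ n) * (qbinom n (int m) + qvar ^ n * qbinom (n - 1) (int m - 1))"
    by (simp only: n qbinom_absorb) (simp add: algebra_simps)
  finally have "kaplansky_poly n m
      = (1 - qvar ^ n) * (qbinom n (int m) + qvar ^ n * qbinom (n - 1) (int m - 1)) div (1 - qvar ^ n)"
    by (simp add: kaplansky_poly_def monom_one_eq_qvar_power gauss_poly_eq_qbinom)
  then show ?thesis
    using assms by (simp add: qvar_power_eq_1_iff)
qed

lemma kaplansky_poly_eq_alt:
  assumes "n \<noteq> 0"
  shows "kaplansky_poly n m = qvar ^ m * qbinom n (int m) + qbinom (n - 1) (int m - 1)"
proof -
  obtain n' where n: "n = Suc n'"
    using assms not0_implies_Suc by blast
  have "(1 - qvar ^ m) * qbinom n (int m) = (1 - qvar ^ n) * qbinom (n - 1) (int m - 1)"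
    using qbinom_absorb[of m n'] n by simp
  then show ?thesis
    using kaplansky_poly_eq[OF assms, of m] by (simp add: algebra_simps)
qed

definition nonneg_coeffs :: "'a::linordered_semidom poly \<Rightarrow> bool" where
  "nonneg_coeffs p \<longleftrightarrow> (\<forall>i. coeff p i \<ge> 0)"

lemma nonneg_coeffs_add: "nonneg_coeffs p \<Longrightarrow> nonneg_coeffs q \<Longrightarrow> nonneg_coeffs (p + q)"
  by (simp add: nonneg_coeffs_def)

lemma nonneg_coeffs_mult: "nonneg_coeffs p \<Longrightarrow> nonneg_coeffs q \<Longrightarrow> nonneg_coeffs (p * q)"
  unfolding nonneg_coeffs_def coeff_mult by (auto intro!: sum_nonneg)

lemma nonneg_coeffs_monom: "c \<ge> 0 \<Longrightarrow> nonneg_coeffs (monom c k)"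
  by (simp add: nonneg_coeffs_def coeff_monom)

lemma nonneg_coeffs_qvar_power: "nonneg_coeffs (qvar ^ k)"
  by (simp flip: monom_one_eq_qvar_power add: nonneg_coeffs_monom)

lemma nonneg_coeffs_qbinom: "nonneg_coeffs (qbinom n k)"
proof (induction n arbitrary: k)
  case 0
  then show ?case by (simp add: nonneg_coeffs_def)
next
  case (Suc n)
  then show ?case by (simp add: nonneg_coeffs_add nonneg_coeffs_mult nonneg_coeffs_qvar_power)
qed

definition qbinom_defect :: "nat \<Rightarrow> nat \<Rightarrow> int \<Rightarrow> int \<Rightarrow> nat \<Rightarrow> rat poly" where
  "qbinom_defect a b i j t =
     qbinom a i * qbinom b j - qvar ^ t * qbinom a (i - 1) * qbinom b (j + 1)"

lemma qbinom_defect_Suc_right_0: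
  assumes "0 \<le> j"
  shows "qbinom_defect a (Suc b) i j 0
    = qbinom_defect a b i (j - 1) 0 + qvar ^ nat j * qbinom_defect a b i j 1"
proof -
  have "nat (j + 1) = Suc (nat j)"
    using assms by simp
  then show ?thesis
    by (simp add: qbinom_defect_def algebra_simps)
qed

lemma qbinom_defect_Suc_right_Suc:
  assumes "j \<le> int b"
  shows "qbinom_defect a (Suc b) i j (Suc t)
    = qvar ^ nat (int (Suc b) - j) * qbinom_defect a b i (j - 1) t + qbinom_defect a b i j (Suc t)"
proof -
  have "nat (int (Suc b) - j) = Suc (nat (int (Suc b) - (j + 1)))"
    using assms by simp
  then show ?thesis
    unfolding qbinom_defect_def qbinom_Suc_alt[of b j] qbinom_Suc_alt[of b "j + 1"]
    by (simp add: algebra_simps)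
qed

lemma qbinom_defect_Suc_left_0:
  assumes "i \<le> int (Suc a)"
  shows "qbinom_defect (Suc a) b i j 0
    = qvar ^ nat (int (Suc a) - i) * qbinom_defect a b (i - 1) j 1 + qbinom_defect a b i j 0"
proof -
  have "nat (int (Suc a) - (i - 1)) = Suc (nat (int (Suc a) - i))"
    using assms by simp
  then show ?thesis
    unfolding qbinom_defect_def qbinom_Suc_alt[of a i] qbinom_Suc_alt[of a "i - 1"]
    by (simp add: algebra_simps)
qed

lemma qbinom_defect_Suc_left_Suc:
  assumes "1 \<le> i"
  shows "qbinom_defect (Suc a) b i j (Suc t)
    = qbinom_defect a b (i - 1) j (Suc t) + qvar ^ nat i * qbinom_defect a b i j t"
proof -
  have "nat i = Suc (nat (i - 1))"
    using assms by simp
  then show ?thesis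
    by (simp add: qbinom_defect_def algebra_simps)
qed

lemma qbinom_defect_cases:
  fixes a b :: nat and i j :: int
  assumes "int b - j - 1 \<le> int a - i" and "i \<le> j + 1"
  obtains (vanishing) "i \<le> 0 \<or> int b < j + 1"
    | (right) b' where "b = Suc b'" "1 \<le> i" "i \<le> j" "j \<le> int b'"
    | (diagonal) "a = b" "i = j + 1"
    | (left) a' where "a = Suc a'" "1 \<le> i" "i = j + 1" "j + 1 \<le> int b" "int b - j \<le> int a - i"
proof -
  consider "i \<le> 0 \<or> int b < j + 1" | "1 \<le> i" "j + 1 \<le> int b" "i \<le> j"
    | "1 \<le> i" "j + 1 \<le> int b" "i = j + 1"
    using assms(2) by linarith
  then show ?thesis
  proof cases
    case 2
    then show ?thesis using right[of "b - 1"] by simp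
  next
    case 3
    then show ?thesis using diagonal left[of "a - 1"] assms(1) by (cases "a = b") simp_all
  qed (rule vanishing)
qed

lemma qbinom_defect_nonneg:
  assumes "int b - j - 1 \<le> int a - i" and "i \<le> j + 1" and "int t \<le> int a - int b + 2 * (j - i + 1)"
  shows "nonneg_coeffs (qbinom_defect a b i j t)"
  using assms
proof (induction "a + b" arbitrary: a b i j t rule: less_induct)
  case less
  have IH: "nonneg_coeffs (qbinom_defect a' b' i' j' t')"
    if "a' + b' < a + b" "int b' - j' - 1 \<le> int a' - i'" "i' \<le> j' + 1"
      "int t' \<le> int a' - int b' + 2 * (j' - i' + 1)" for a' b' i' j' t'
    using less.hyps[OF that] .
  from less.prems(1,2) show ?case
  proof (cases rule: qbinom_defect_cases)
    case vanishing
    then have "qbinom a (i - 1) * qbinom b (j + 1) = 0"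
      by (auto simp: qbinom_eq_0)
    then have "qbinom_defect a b i j t = qbinom a i * qbinom b j"
      by (simp add: qbinom_defect_def mult.assoc)
    then show ?thesis
      by (simp add: nonneg_coeffs_mult nonneg_coeffs_qbinom)
  next
    case (right b')
    show ?thesis
    proof (cases t)
      case 0
      have "nonneg_coeffs (qbinom_defect a b' i (j - 1) 0)" "nonneg_coeffs (qbinom_defect a b' i j 1)"
        by (rule IH; use less.prems right in auto)+
      moreover have "0 \<le> j"
        using right by simp
      ultimately show ?thesis
        unfolding right(1) 0 qbinom_defect_Suc_right_0[OF \<open>0 \<le> j\<close>]
        by (intro nonneg_coeffs_add nonneg_coeffs_mult nonneg_coeffs_qvar_power)
    next
      case (Suc t')
      have "nonneg_coeffs (qbinom_defect a b' i (j - 1) t')" "nonneg_coeffs (qbinom_defect a b' i j t)"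
        by (rule IH; use less.prems right Suc in auto)+
      then show ?thesis
        unfolding right(1) Suc qbinom_defect_Suc_right_Suc[OF right(4)]
        by (intro nonneg_coeffs_add nonneg_coeffs_mult nonneg_coeffs_qvar_power) (simp_all add: Suc)
    qed
  next
    case diagonal
    then have "qbinom_defect a b i j t = 0"
      using less.prems(3) by (simp add: qbinom_defect_def)
    then show ?thesis
      by (simp add: nonneg_coeffs_def)
  next
    case (left a')
    show ?thesis
    proof (cases t)
      case 0
      have "nonneg_coeffs (qbinom_defect a' b (i - 1) j 1)" "nonneg_coeffs (qbinom_defect a' b i j 0)"
        by (rule IH; use less.prems left in auto)+
      moreover have "i \<le> int (Suc a')"
        using left by simp
      ultimately show ?thesis
        unfolding left(1) 0 qbinom_defect_Suc_left_0[OF \<open>i \<le> int (Suc a')\<close>]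
        by (intro nonneg_coeffs_add nonneg_coeffs_mult nonneg_coeffs_qvar_power)
    next
      case (Suc t')
      have "nonneg_coeffs (qbinom_defect a' b (i - 1) j t)" "nonneg_coeffs (qbinom_defect a' b i j t')"
        by (rule IH; use less.prems left Suc in auto)+
      then show ?thesis
        unfolding left(1) Suc qbinom_defect_Suc_left_Suc[OF left(2)]
        by (intro nonneg_coeffs_add nonneg_coeffs_mult nonneg_coeffs_qvar_power) (simp_all add: Suc)
    qed
  qed
qed

definition kaplansky_defect :: "nat \<Rightarrow> nat \<Rightarrow> nat \<Rightarrow> nat \<Rightarrow> rat poly" where
  "kaplansky_defect n m l r =
     kaplansky_poly n m * kaplansky_poly n l
     - monom 1 r * kaplansky_poly n (m - 1) * kaplansky_poly n (l + 1)"

lemma kaplansky_defect_eq_qbinom_defects: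
  assumes "n \<noteq> 0" and "1 \<le> m"
  shows "kaplansky_defect n m l r =
      qbinom_defect n n m l r
    + qvar ^ n * qbinom_defect (n - 1) n (int m - 1) l r
    + qvar ^ n * qbinom_defect n (n - 1) m (int l - 1) r
    + qvar ^ (n + n) * qbinom_defect (n - 1) (n - 1) (int m - 1) (int l - 1) r"
  using assms
  by (simp add: kaplansky_defect_def kaplansky_poly_eq qbinom_defect_def monom_one_eq_qvar_power
      of_nat_diff algebra_simps power_add)

lemma kaplansky_defect_eq_qbinom_defects_alt:
  assumes "n \<noteq> 0" and "1 \<le> m"
  shows "kaplansky_defect n m l (Suc r) =
      qvar ^ (m + l) * qbinom_defect n n m l (Suc r)
    + qvar ^ l * qbinom_defect (n - 1) n (int m - 1) l (Suc (Suc r))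
    + qvar ^ m * qbinom_defect n (n - 1) m (int l - 1) r
    + qbinom_defect (n - 1) (n - 1) (int m - 1) (int l - 1) (Suc r)"
proof -
  obtain m' where "m = Suc m'"
    using assms(2) by (cases m) auto
  then show ?thesis
    using assms(1)
    by (simp add: kaplansky_defect_def kaplansky_poly_eq_alt qbinom_defect_def monom_one_eq_qvar_power
        of_nat_diff algebra_simps power_add)
qed

text \<open>With \<open>K\<^sub>q(n, m) = [n, m] + q\<^sup>n [n-1, m-1]\<close> the third defect forces
  \<open>r \<le> 2 (l - m) + 1\<close>; the other form of \<open>K\<^sub>q\<close> takes over for \<open>r \<ge> 1\<close>.\<close>
lemma kaplansky_defect_nonneg:
  assumes "1 \<le> m" and "m \<le> l" and "l < n" and "r \<le> 2 * l - 2 * m + 1"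
  shows "nonneg_coeffs (kaplansky_defect n m l r)"
proof -
  have "nonneg_coeffs (qbinom_defect n n m l r)"
    and "nonneg_coeffs (qbinom_defect (n - 1) n (int m - 1) l r)"
    and "nonneg_coeffs (qbinom_defect n (n - 1) m (int l - 1) r)"
    and "nonneg_coeffs (qbinom_defect (n - 1) (n - 1) (int m - 1) (int l - 1) r)"
    by (rule qbinom_defect_nonneg; use assms in \<open>auto simp: of_nat_diff\<close>)+
  moreover have "n \<noteq> 0"
    using assms(3) by simp
  ultimately show ?thesis
    unfolding kaplansky_defect_eq_qbinom_defects[OF \<open>n \<noteq> 0\<close> assms(1)]
    by (intro nonneg_coeffs_add nonneg_coeffs_mult nonneg_coeffs_qvar_power)
qed

lemma kaplansky_defect_Suc_nonneg:
  assumes "1 \<le> m" and "m \<le> l" and "l < n" and "Suc r \<le> 2 * l - 2 * m + 2"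
  shows "nonneg_coeffs (kaplansky_defect n m l (Suc r))"
proof -
  have "nonneg_coeffs (qbinom_defect n n m l (Suc r))"
    and "nonneg_coeffs (qbinom_defect (n - 1) n (int m - 1) l (Suc (Suc r)))"
    and "nonneg_coeffs (qbinom_defect n (n - 1) m (int l - 1) r)"
    and "nonneg_coeffs (qbinom_defect (n - 1) (n - 1) (int m - 1) (int l - 1) (Suc r))"
    by (rule qbinom_defect_nonneg; use assms in \<open>auto simp: of_nat_diff\<close>)+
  moreover have "n \<noteq> 0"
    using assms(3) by simp
  ultimately show ?thesis
    unfolding kaplansky_defect_eq_qbinom_defects_alt[OF \<open>n \<noteq> 0\<close> assms(1)]
    by (intro nonneg_coeffs_add nonneg_coeffs_mult nonneg_coeffs_qvar_power)
qed

theorem theorem1p2: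
  fixes n m l r :: nat
  assumes "1 \<le> m" and "m \<le> l" and "l < n" and "r \<le> 2 * l - 2 * m + 2"
  shows "\<forall>i. coeff (kaplansky_poly n m * kaplansky_poly n l
                  - monom 1 r * kaplansky_poly n (m - 1) * kaplansky_poly n (l + 1)) i \<ge> 0"
proof -
  have "nonneg_coeffs (kaplansky_defect n m l r)"
  proof (cases r)
    case 0
    then show ?thesis
      using kaplansky_defect_nonneg[OF assms(1-3)] by simp
  next
    case (Suc r')
    then show ?thesis
      using kaplansky_defect_Suc_nonneg[OF assms(1-3)] assms(4) by simp
  qed
  then show ?thesis
    by (simp add: nonneg_coeffs_def kaplansky_defect_def)
qed

end
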